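(* For any $f \in L^{\infty}([1,\infty))$ and $r > 0$, \[\lim_{x\to\infty}\frac{r}{x^r}\int_1^x f(t)t^{r-1}\,dt = \alpha\] if and only if \[\lim_{x\to\infty} r x^r \int_x^{\infty} f(t)\,\frac{dt}{t^{r+1}} = \alpha.\]
   Context: $L^{\infty}([1,\infty))$ denotes the essentially bounded measurable complex-valued functions on $[1,\infty)$; $\alpha$ is a complex number. *)

theory Defs
  imports "HOL-Analysis.Analysis"
begin

end

theory Submission
  imports Defs
begin

(*
  For bounded measurable h and r > 0 consider the two weighted means
    A(x) = r x^(-r) * integral over [1, x] of t^(r-1) h(t),
    B(x) = r x^r * integral over [x, oo) of t^(-r-1) h(t)
  (head_average and tail_average below). Both averaging operators are regular: they send a
  bounded function converging to alpha to a function converging to alpha. Exchanging the order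
  of integration gives, for x >= 1,
    tail average of A = (A + B) / 2   and   head average of B = (A + B - x^(-r) B(1)) / 2,
  so if one of A, B tends to alpha, the other tends to 2 alpha - alpha = alpha.
*)

lemma sigma_finite_measure_completion:
  assumes "sigma_finite_measure M"
  shows "sigma_finite_measure (completion M)"
proof
  obtain A where A: "countable A" "A \<subseteq> sets M" "\<Union>A = space M" "\<forall>a\<in>A. emeasure M a \<noteq> \<infinity>"
    using sigma_finite_measure.sigma_finite_countable[OF assms] by blast
  show "\<exists>A. countable A \<and> A \<subseteq> sets (completion M) \<and> \<Union>A = space (completion M) \<and>
      (\<forall>a\<in>A. emeasure (completion M) a \<noteq> \<infinity>)"
    using A by (intro exI[of _ A]) (auto simp: main_part_sets)
qed

interpretation lebesgue: sigma_finite_measure "lebesgue :: 'a::euclidean_space measure"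
  by (rule sigma_finite_measure_completion[OF sigma_finite_lborel])

interpretation lebesgue_pair:
  pair_sigma_finite "lebesgue :: real measure" "lebesgue :: real measure" ..

lemma borel_measurable_lebesgue_ident [measurable]:
  "(\<lambda>x. x) \<in> borel_measurable (lebesgue :: 'a::euclidean_space measure)"
  by (rule measurable_completion) simp

lemmas borel_measurable_lebesgue_pair_fst [measurable] =
  measurable_compose[OF measurable_fst borel_measurable_lebesgue_ident]
lemmas borel_measurable_lebesgue_pair_snd [measurable] =
  measurable_compose[OF measurable_snd borel_measurable_lebesgue_ident]

lemma integral_powr_Icc:
  fixes a b e :: real
  assumes "e \<noteq> -1" "0 < a" "a \<le> b"
  shows "integrable lebesgue (\<lambda>s. indicator {a..b} s * s powr e)"
    and "(\<integral>s. indicator {a..b} s * s powr e \<partial>lebesgue)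
      = (b powr (e + 1) - a powr (e + 1)) / (e + 1)"
proof -
  have "((\<lambda>s. s powr e) has_integral (b powr (e + 1) / (e + 1) - a powr (e + 1) / (e + 1))) {a..b}"
  proof (rule fundamental_theorem_of_calculus[OF assms(3)])
    fix s assume "s \<in> {a..b}"
    then have "s > 0" using assms by auto
    then show "((\<lambda>s. s powr (e + 1) / (e + 1)) has_vector_derivative s powr e)
        (at s within {a..b})"
      using assms(1) DERIV_cdivide[OF has_real_derivative_powr[of s "e + 1"], of "e + 1"]
      by (simp add: has_field_derivative_at_within
          flip: has_real_derivative_iff_has_vector_derivative)
  qed
  then have int: "((\<lambda>s. s powr e) has_integral (b powr (e + 1) - a powr (e + 1)) / (e + 1)) {a..b}"
    by (simp add: diff_divide_distrib)
  have abs_int: "(\<lambda>s. s powr e) absolutely_integrable_on {a..b}"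
    using int by (intro nonnegative_absolutely_integrable_1) (auto simp: integrable_on_def)
  then show "integrable lebesgue (\<lambda>s. indicator {a..b} s * s powr e)"
    by (simp add: set_integrable_def)
  show "(\<integral>s. indicator {a..b} s * s powr e \<partial>lebesgue)
      = (b powr (e + 1) - a powr (e + 1)) / (e + 1)"
    using set_lebesgue_integral_eq_integral(2)[OF abs_int] integral_unique[OF int]
    by (simp add: set_lebesgue_integral_def)
qed

lemma integral_powr_Ici:
  fixes a e :: real
  assumes "e < -1" "0 < a"
  shows "integrable lebesgue (\<lambda>s. indicator {a..} s * s powr e)"
    and "(\<integral>s. indicator {a..} s * s powr e \<partial>lebesgue) = - (a powr (e + 1)) / (e + 1)"
proof -
  have int: "((\<lambda>s. s powr e) has_integral - (a powr (e + 1)) / (e + 1)) {a..}"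
    by (rule has_integral_powr_to_inf[OF assms])
  have abs_int: "(\<lambda>s. s powr e) absolutely_integrable_on {a..}"
    using int by (intro nonnegative_absolutely_integrable_1) (auto simp: integrable_on_def)
  then show "integrable lebesgue (\<lambda>s. indicator {a..} s * s powr e)"
    by (simp add: set_integrable_def)
  show "(\<integral>s. indicator {a..} s * s powr e \<partial>lebesgue) = - (a powr (e + 1)) / (e + 1)"
    using set_lebesgue_integral_eq_integral(2)[OF abs_int] integral_unique[OF int]
    by (simp add: set_lebesgue_integral_def)
qed

lemma integrable_powr_Ioi:
  fixes a e :: real
  assumes "e < -1" "0 < a"
  shows "integrable lebesgue (\<lambda>s. indicator {a<..} s * s powr e)"
proof -
  have "(\<lambda>s. indicator {a<..} s *\<^sub>R (indicator {a..} s * s powr e))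
      = (\<lambda>s. indicator {a<..} s * s powr e)"
    by (auto simp: indicator_def fun_eq_iff)
  then show ?thesis
    using integrable_mult_indicator[OF _ integral_powr_Ici(1)[OF assms], of "{a<..}"] by simp
qed

lemma integrable_scaleR_bounded:
  fixes k :: "'a \<Rightarrow> real" and g :: "'a \<Rightarrow> 'b::{banach, second_countable_topology}"
  assumes k: "integrable M k" and g: "g \<in> borel_measurable M"
    and bound: "\<And>s. k s \<noteq> 0 \<Longrightarrow> norm (g s) \<le> C"
  shows "integrable M (\<lambda>s. k s *\<^sub>R g s)"
proof (rule Bochner_Integration.integrable_bound)
  show "integrable M (\<lambda>s. \<bar>C\<bar> * k s)" using k by simp
  show "(\<lambda>s. k s *\<^sub>R g s) \<in> borel_measurable M"
    using borel_measurable_integrable[OF k] g by measurable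
  have "norm (k s *\<^sub>R g s) \<le> norm (\<bar>C\<bar> * k s)" for s
    using bound[of s] by (cases "k s = 0") (auto simp: abs_mult mult.commute intro: mult_right_mono)
  then show "AE s in M. norm (k s *\<^sub>R g s) \<le> norm (\<bar>C\<bar> * k s)" by simp
qed

lemma norm_integral_scaleR_le:
  fixes k b :: "'a \<Rightarrow> real" and g :: "'a \<Rightarrow> 'b::{banach, second_countable_topology}"
  assumes k: "integrable M k" "\<And>s. k s \<ge> 0" and kb: "integrable M (\<lambda>s. k s * b s)"
    and g: "g \<in> borel_measurable M" and bound: "\<And>s. k s \<noteq> 0 \<Longrightarrow> norm (g s) \<le> b s"
  shows "norm (\<integral>s. k s *\<^sub>R g s \<partial>M) \<le> (\<integral>s. k s * b s \<partial>M)"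
proof -
  have pointwise: "norm (k s *\<^sub>R g s) \<le> k s * b s" for s
    using bound[of s] k(2)[of s] by (cases "k s = 0") (auto intro: mult_left_mono)
  have "integrable M (\<lambda>s. k s *\<^sub>R g s)"
    using kb pointwise borel_measurable_integrable[OF k(1)] g
    by (intro Bochner_Integration.integrable_bound[OF kb])
      (auto intro: order_trans[OF _ abs_ge_self])
  then have "(\<integral>s. norm (k s *\<^sub>R g s) \<partial>M) \<le> (\<integral>s. k s * b s \<partial>M)"
    using kb pointwise by (intro integral_mono integrable_norm) auto
  then show ?thesis
    using integral_norm_bound[of M "\<lambda>s. k s *\<^sub>R g s"] by simp
qed

lemma (in pair_sigma_finite) integral_kernel_swap:
  fixes k :: "'a \<times> 'b \<Rightarrow> real" and g :: "'b \<Rightarrow> 'c::{banach, second_countable_topology}"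
  assumes k [measurable]: "k \<in> borel_measurable (M1 \<Otimes>\<^sub>M M2)" and k_nonneg: "\<And>p. k p \<ge> 0"
    and k_fst: "\<And>t. integrable M2 (\<lambda>s. k (t, s))"
    and k_snd: "\<And>s. integrable M1 (\<lambda>t. k (t, s))"
    and k_marginal: "integrable M1 (\<lambda>t. \<integral>s. k (t, s) \<partial>M2)"
    and g [measurable]: "g \<in> borel_measurable M2" and g_bound: "\<And>s. norm (g s) \<le> C"
  shows "(\<integral>t. (\<integral>s. k (t, s) *\<^sub>R g s \<partial>M2) \<partial>M1) = (\<integral>s. (\<integral>t. k (t, s) \<partial>M1) *\<^sub>R g s \<partial>M2)"
proof -
  have sections: "integrable M2 (\<lambda>s. k (t, s) *\<^sub>R g s)" for t
    using integrable_scaleR_bounded[OF k_fst g g_bound] .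
  have norm_le: "(\<integral>s. norm (k (t, s) *\<^sub>R g s) \<partial>M2) \<le> C * (\<integral>s. k (t, s) \<partial>M2)" for t
  proof -
    have "(\<integral>s. norm (k (t, s) *\<^sub>R g s) \<partial>M2) \<le> (\<integral>s. C * k (t, s) \<partial>M2)"
    proof (rule integral_mono)
      show "norm (k (t, s) *\<^sub>R g s) \<le> C * k (t, s)" for s
        using mult_left_mono[OF g_bound[of s] k_nonneg[of "(t, s)"]] k_nonneg[of "(t, s)"]
        by (simp add: mult.commute)
    qed (use integrable_norm[OF sections] k_fst in auto)
    then show ?thesis by simp
  qed
  have "integrable M1 (\<lambda>t. \<integral>s. norm (k (t, s) *\<^sub>R g s) \<partial>M2)"
  proof (rule Bochner_Integration.integrable_bound)
    show "integrable M1 (\<lambda>t. C * (\<integral>s. k (t, s) \<partial>M2))" using k_marginal by simp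
    show "AE t in M1. norm (\<integral>s. norm (k (t, s) *\<^sub>R g s) \<partial>M2) \<le> norm (C * (\<integral>s. k (t, s) \<partial>M2))"
      using order_trans[OF norm_le abs_ge_self] by (simp add: integral_nonneg_AE)
  qed measurable
  then have "integrable (M1 \<Otimes>\<^sub>M M2) (\<lambda>p. k p *\<^sub>R g (snd p))"
    using sections by (intro Fubini_integrable) auto
  then show ?thesis
    using Fubini_integral[of "\<lambda>t s. k (t, s) *\<^sub>R g s"] k_snd by (simp add: split_beta')
qed

lemma integral_indicator_greaterThan_eq_atLeast:
  fixes w :: "real \<Rightarrow> real" and g :: "real \<Rightarrow> 'a::{banach, second_countable_topology}"
  assumes [measurable]: "w \<in> borel_measurable lebesgue" "g \<in> borel_measurable lebesgue"
  shows "(\<integral>s. (indicator {x<..} s * w s) *\<^sub>R g s \<partial>lebesgue)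
    = (\<integral>s. (indicator {x..} s * w s) *\<^sub>R g s \<partial>lebesgue)"
proof (rule integral_cong_AE)
  show "AE s in lebesgue. (indicator {x<..} s * w s) *\<^sub>R g s = (indicator {x..} s * w s) *\<^sub>R g s"
    using AE_completion[OF AE_lborel_singleton[of x]] by eventually_elim (auto simp: indicator_def)
qed measurable

definition head_average :: "real \<Rightarrow> (real \<Rightarrow> 'a::{banach, second_countable_topology}) \<Rightarrow> real \<Rightarrow> 'a"
  where "head_average r g x =
    (r / x powr r) *\<^sub>R (\<integral>t. (indicator {1..x} t * t powr (r - 1)) *\<^sub>R g t \<partial>lebesgue)"

definition tail_average :: "real \<Rightarrow> (real \<Rightarrow> 'a::{banach, second_countable_topology}) \<Rightarrow> real \<Rightarrow> 'a"
  where "tail_average r g x =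
    (r * x powr r) *\<^sub>R (\<integral>t. (indicator {x..} t * t powr (- r - 1)) *\<^sub>R g t \<partial>lebesgue)"

lemma integral_head_weight:
  fixes r x :: real
  assumes "r > 0" "x \<ge> 1"
  shows "integrable lebesgue (\<lambda>t. indicator {1..x} t * t powr (r - 1))"
    and "(\<integral>t. indicator {1..x} t * t powr (r - 1) \<partial>lebesgue) = (x powr r - 1) / r"
  using integral_powr_Icc[of "r - 1" 1 x] assms by simp_all

lemma integral_tail_weight:
  fixes r x :: real
  assumes "r > 0" "x > 0"
  shows "integrable lebesgue (\<lambda>t. indicator {x..} t * t powr (- r - 1))"
    and "(\<integral>t. indicator {x..} t * t powr (- r - 1) \<partial>lebesgue) = x powr (- r) / r"
  using integral_powr_Ici[of "- r - 1" x] assms by simp_all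

lemma borel_measurable_head_average [measurable]:
  assumes [measurable]: "g \<in> borel_measurable lebesgue"
  shows "head_average r g \<in> borel_measurable lebesgue"
proof -
  have "(\<lambda>(x, t). (indicator {1..x} t * t powr (r - 1)) *\<^sub>R g t) =
      (\<lambda>p. ((if 1 \<le> snd p \<and> snd p \<le> fst p then 1 else 0) * snd p powr (r - 1)) *\<^sub>R g (snd p))"
    by (auto simp: indicator_def fun_eq_iff)
  also have "\<dots> \<in> borel_measurable (lebesgue \<Otimes>\<^sub>M lebesgue)"
    by measurable
  finally show ?thesis
    unfolding head_average_def[abs_def] by measurable
qed

lemma borel_measurable_tail_average [measurable]:
  assumes [measurable]: "g \<in> borel_measurable lebesgue"
  shows "tail_average r g \<in> borel_measurable lebesgue"
proof -
  have "(\<lambda>(x, t). (indicator {x..} t * t powr (- r - 1)) *\<^sub>R g t) =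
      (\<lambda>p. ((if fst p \<le> snd p then 1 else 0) * snd p powr (- r - 1)) *\<^sub>R g (snd p))"
    by (auto simp: indicator_def fun_eq_iff)
  also have "\<dots> \<in> borel_measurable (lebesgue \<Otimes>\<^sub>M lebesgue)"
    by measurable
  finally show ?thesis
    unfolding tail_average_def[abs_def] by measurable
qed

lemma head_average_diff_const:
  assumes r: "r > 0" and x: "x \<ge> 1" and g: "g \<in> borel_measurable lebesgue"
    and bound: "\<And>t. t \<in> {1..x} \<Longrightarrow> norm (g t) \<le> D"
  shows "head_average r (\<lambda>t. g t - c) x = head_average r g x - (1 - x powr (- r)) *\<^sub>R c"
proof -
  note weight = integral_head_weight[OF r x]
  have "integrable lebesgue (\<lambda>t. (indicator {1..x} t * t powr (r - 1)) *\<^sub>R g t)"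
    using weight(1) g bound
    by (rule integrable_scaleR_bounded) (auto simp: indicator_def split: if_splits)
  then have "(\<integral>t. (indicator {1..x} t * t powr (r - 1)) *\<^sub>R (g t - c) \<partial>lebesgue)
      = (\<integral>t. (indicator {1..x} t * t powr (r - 1)) *\<^sub>R g t \<partial>lebesgue) - ((x powr r - 1) / r) *\<^sub>R c"
    using weight by (simp add: scaleR_diff_right)
  moreover have "r / x powr r * ((x powr r - 1) / r) = 1 - x powr (- r)"
    using r x by (simp add: powr_minus field_simps)
  ultimately show ?thesis
    by (simp add: head_average_def scaleR_diff_right)
qed

lemma tail_average_diff_const:
  assumes r: "r > 0" and x: "x > 0" and g: "g \<in> borel_measurable lebesgue"
    and bound: "\<And>t. t \<ge> x \<Longrightarrow> norm (g t) \<le> D"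
  shows "tail_average r (\<lambda>t. g t - c) x = tail_average r g x - c"
proof -
  note weight = integral_tail_weight[OF r x]
  have "integrable lebesgue (\<lambda>t. (indicator {x..} t * t powr (- r - 1)) *\<^sub>R g t)"
    using weight(1) g bound
    by (rule integrable_scaleR_bounded) (auto simp: indicator_def split: if_splits)
  then have "(\<integral>t. (indicator {x..} t * t powr (- r - 1)) *\<^sub>R (g t - c) \<partial>lebesgue)
      = (\<integral>t. (indicator {x..} t * t powr (- r - 1)) *\<^sub>R g t \<partial>lebesgue) - (x powr (- r) / r) *\<^sub>R c"
    using weight by (simp add: scaleR_diff_right)
  moreover have "r * x powr r * (x powr (- r) / r) = 1"
    using r x by (simp add: powr_minus field_simps)
  ultimately show ?thesis
    by (simp add: tail_average_def scaleR_diff_right)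
qed

lemma norm_tail_average_le:
  assumes r: "r > 0" and x: "x > 0" and g: "g \<in> borel_measurable lebesgue"
    and bound: "\<And>t. t \<ge> x \<Longrightarrow> norm (g t) \<le> C"
  shows "norm (tail_average r g x) \<le> C"
proof -
  note weight = integral_tail_weight[OF r x]
  have "norm (\<integral>t. (indicator {x..} t * t powr (- r - 1)) *\<^sub>R g t \<partial>lebesgue)
      \<le> (\<integral>t. indicator {x..} t * t powr (- r - 1) * C \<partial>lebesgue)"
    using weight(1) g bound
    by (intro norm_integral_scaleR_le) (auto simp: indicator_def split: if_splits)
  also have "\<dots> = C * (x powr (- r) / r)"
    using weight by simp
  finally show ?thesis
    using r x by (simp add: tail_average_def powr_minus field_simps mult_left_mono)
qed

lemma norm_head_average_le:
  assumes r: "r > 0" and X: "1 \<le> X" "X \<le> x" and g: "g \<in> borel_measurable lebesgue"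
    and bound_head: "\<And>t. t \<in> {1..X} \<Longrightarrow> norm (g t) \<le> M"
    and bound_tail: "\<And>t. t \<in> {X..x} \<Longrightarrow> norm (g t) \<le> \<epsilon>"
  shows "norm (head_average r g x) \<le> M * X powr r * x powr (- r) + \<epsilon>"
proof -
  have M: "M \<ge> 0" and \<epsilon>: "\<epsilon> \<ge> 0"
    using bound_head[of 1] bound_tail[of x] X by (auto intro: order_trans[OF norm_ge_zero])
  have split: "indicator {1..x} t * t powr (r - 1) * (M * indicator {..X} t + \<epsilon>)
      = M * (indicator {1..X} t * t powr (r - 1)) + \<epsilon> * (indicator {1..x} t * t powr (r - 1))" for t
    using X by (auto simp: indicator_def algebra_simps)
  have "norm (\<integral>t. (indicator {1..x} t * t powr (r - 1)) *\<^sub>R g t \<partial>lebesgue)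
      \<le> (\<integral>t. indicator {1..x} t * t powr (r - 1) * (M * indicator {..X} t + \<epsilon>) \<partial>lebesgue)"
  proof (rule norm_integral_scaleR_le[OF integral_head_weight(1)[OF r] _ _ g])
    show "integrable lebesgue
        (\<lambda>t. indicator {1..x} t * t powr (r - 1) * (M * indicator {..X} t + \<epsilon>))"
      unfolding split using integral_head_weight(1)[OF r] X by auto
    show "norm (g t) \<le> M * indicator {..X} t + \<epsilon>" if "indicator {1..x} t * t powr (r - 1) \<noteq> 0" for t
      using that bound_head[of t] bound_tail[of t] M \<epsilon> by (cases "t \<le> X") (auto simp: indicator_def)
  qed (use X in auto)
  also have "\<dots> = M * ((X powr r - 1) / r) + \<epsilon> * ((x powr r - 1) / r)"
    unfolding split using integral_head_weight[OF r] X by auto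
  also have "\<dots> \<le> M * (X powr r / r) + \<epsilon> * (x powr r / r)"
    using M \<epsilon> r by (intro add_mono mult_left_mono divide_right_mono) auto
  finally show ?thesis
    using r X by (simp add: head_average_def powr_minus field_simps mult_left_mono)
qed

lemma tendsto_tail_average_zero:
  assumes r: "r > 0" and g: "g \<in> borel_measurable lebesgue" and lim: "(g \<longlongrightarrow> 0) at_top"
  shows "(tail_average r g \<longlongrightarrow> 0) at_top"
proof (rule tendstoI)
  fix \<epsilon> :: real assume "\<epsilon> > 0"
  then obtain X where X: "\<And>t. t \<ge> X \<Longrightarrow> dist (g t) 0 < \<epsilon> / 2"
    using tendstoD[OF lim, of "\<epsilon> / 2"] unfolding eventually_at_top_linorder by auto
  have half: "norm (tail_average r g x) \<le> \<epsilon> / 2" if "x \<ge> max X 1" for x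
    using that X by (intro norm_tail_average_le[OF r _ g]) (auto intro: less_imp_le)
  show "\<forall>\<^sub>F x in at_top. dist (tail_average r g x) 0 < \<epsilon>"
    unfolding eventually_at_top_linorder
  proof (intro exI allI impI)
    fix x assume "x \<ge> max X 1"
    with half[OF this] \<open>\<epsilon> > 0\<close> show "dist (tail_average r g x) 0 < \<epsilon>"
      by simp
  qed
qed

lemma tendsto_tail_average:
  fixes g :: "real \<Rightarrow> 'a::{banach, second_countable_topology}"
  assumes r: "r > 0" and g [measurable]: "g \<in> borel_measurable lebesgue"
    and lim: "(g \<longlongrightarrow> \<alpha>) at_top"
  shows "(tail_average r g \<longlongrightarrow> \<alpha>) at_top"
proof -
  obtain T where T: "\<And>t. t \<ge> T \<Longrightarrow> dist (g t) \<alpha> < 1"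
    using tendstoD[OF lim, of 1] unfolding eventually_at_top_linorder by auto
  have "tail_average r (\<lambda>t. g t - \<alpha>) x + \<alpha> = tail_average r g x" if x: "x \<ge> max T 1" for x
  proof -
    have "norm (g t) \<le> norm \<alpha> + 1" if "t \<ge> x" for t
      using T[of t] that x norm_triangle_sub[of "g t" \<alpha>] by (auto simp: dist_norm)
    then show ?thesis
      using tail_average_diff_const[OF r _ g, of x "norm \<alpha> + 1" \<alpha>] x by simp
  qed
  then have "\<forall>\<^sub>F x in at_top. tail_average r (\<lambda>t. g t - \<alpha>) x + \<alpha> = tail_average r g x"
    unfolding eventually_at_top_linorder by blast
  moreover have "((\<lambda>x. tail_average r (\<lambda>t. g t - \<alpha>) x + \<alpha>) \<longlongrightarrow> 0 + \<alpha>) at_top"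
    using tendsto_tail_average_zero[OF r _ LIM_zero[OF lim]] by (intro tendsto_intros) simp_all
  ultimately show ?thesis
    by (simp add: Lim_transform_eventually)
qed

lemma tendsto_head_average_zero:
  assumes r: "r > 0" and g: "g \<in> borel_measurable lebesgue"
    and bound: "\<And>t. t \<ge> 1 \<Longrightarrow> norm (g t) \<le> M" and lim: "(g \<longlongrightarrow> 0) at_top"
  shows "(head_average r g \<longlongrightarrow> 0) at_top"
proof (rule tendstoI)
  fix \<epsilon> :: real assume "\<epsilon> > 0"
  then obtain X\<^sub>0 where X\<^sub>0: "\<And>t. t \<ge> X\<^sub>0 \<Longrightarrow> dist (g t) 0 < \<epsilon> / 2"
    using tendstoD[OF lim, of "\<epsilon> / 2"] unfolding eventually_at_top_linorder by auto
  define X where "X = max X\<^sub>0 1"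
  have "X \<ge> 1" and X: "\<And>t. t \<ge> X \<Longrightarrow> norm (g t) \<le> \<epsilon> / 2"
    using X\<^sub>0 by (auto simp: X_def intro: less_imp_le)
  have "((\<lambda>x. M * X powr r * x powr (- r)) \<longlongrightarrow> M * X powr r * 0) at_top"
    using r by (intro tendsto_intros tendsto_neg_powr filterlim_ident) auto
  then have "\<forall>\<^sub>F x in at_top. M * X powr r * x powr (- r) < \<epsilon> / 2"
    using \<open>\<epsilon> > 0\<close> by (intro order_tendstoD(2)) auto
  moreover have "\<forall>\<^sub>F x in at_top. norm (head_average r g x) \<le> M * X powr r * x powr (- r) + \<epsilon> / 2"
    unfolding eventually_at_top_linorder
    using \<open>X \<ge> 1\<close> bound X by (intro exI[of _ X] allI impI norm_head_average_le[OF r _ _ g]) auto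
  ultimately show "\<forall>\<^sub>F x in at_top. dist (head_average r g x) 0 < \<epsilon>"
    by eventually_elim simp
qed

lemma tendsto_head_average:
  fixes g :: "real \<Rightarrow> 'a::{banach, second_countable_topology}"
  assumes r: "r > 0" and g [measurable]: "g \<in> borel_measurable lebesgue"
    and bound: "\<And>t. t \<ge> 1 \<Longrightarrow> norm (g t) \<le> D" and lim: "(g \<longlongrightarrow> \<alpha>) at_top"
  shows "(head_average r g \<longlongrightarrow> \<alpha>) at_top"
proof -
  have "norm (g t - \<alpha>) \<le> D + norm \<alpha>" if "t \<ge> 1" for t
    using bound[OF that] norm_triangle_ineq4[of "g t" \<alpha>] by simp
  then have "(head_average r (\<lambda>t. g t - \<alpha>) \<longlongrightarrow> 0) at_top"
    by (intro tendsto_head_average_zero[OF r _ _ LIM_zero[OF lim]]) simp_all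
  moreover have "((\<lambda>x::real. x powr (- r)) \<longlongrightarrow> 0) at_top"
    using r by (intro tendsto_neg_powr filterlim_ident) auto
  ultimately have "((\<lambda>x. head_average r (\<lambda>t. g t - \<alpha>) x + (1 - x powr (- r)) *\<^sub>R \<alpha>)
      \<longlongrightarrow> 0 + (1 - 0) *\<^sub>R \<alpha>) at_top"
    by (intro tendsto_intros)
  moreover have "\<forall>\<^sub>F x in at_top.
      head_average r (\<lambda>t. g t - \<alpha>) x + (1 - x powr (- r)) *\<^sub>R \<alpha> = head_average r g x"
    unfolding eventually_at_top_linorder
    by (intro exI[of _ 1] allI impI, subst head_average_diff_const[OF r _ g, of _ D])
      (auto intro: bound)
  ultimately show ?thesis
    by (simp add: Lim_transform_eventually)
qed

(* Up to constant factors, the integrands of tail_average r (head_average r h) x and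
   head_average r (tail_average r h) x as functions of (t, s), with h s factored out. *)

definition tail_head_kernel :: "real \<Rightarrow> real \<Rightarrow> real \<times> real \<Rightarrow> real"
  where "tail_head_kernel r x =
    (\<lambda>(t, s). if x \<le> t \<and> 1 \<le> s \<and> s \<le> t then t powr (- 2 * r - 1) * s powr (r - 1) else 0)"

definition head_tail_kernel :: "real \<Rightarrow> real \<Rightarrow> real \<times> real \<Rightarrow> real"
  where "head_tail_kernel r x =
    (\<lambda>(t, s). if 1 \<le> t \<and> t \<le> x \<and> t \<le> s then t powr (2 * r - 1) * s powr (- r - 1) else 0)"

lemma borel_measurable_tail_head_kernel [measurable]:
  "tail_head_kernel r x \<in> borel_measurable (lebesgue \<Otimes>\<^sub>M lebesgue)"
  unfolding tail_head_kernel_def split_beta' by measurable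

lemma borel_measurable_head_tail_kernel [measurable]:
  "head_tail_kernel r x \<in> borel_measurable (lebesgue \<Otimes>\<^sub>M lebesgue)"
  unfolding head_tail_kernel_def split_beta' by measurable

lemma integral_tail_head_kernel:
  fixes r x :: real
  assumes r: "r > 0" and x: "x \<ge> 1"
  shows "integrable lebesgue (\<lambda>s. tail_head_kernel r x (t, s))"
    and "integrable lebesgue (\<lambda>t. tail_head_kernel r x (t, s))"
    and "integrable lebesgue (\<lambda>t. \<integral>s. tail_head_kernel r x (t, s) \<partial>lebesgue)"
    and "(\<integral>t. tail_head_kernel r x (t, s) \<partial>lebesgue) =
      (x powr (- 2 * r) * (indicator {1..x} s * s powr (r - 1))
        + indicator {x<..} s * s powr (- r - 1)) / (2 * r)"
proof -
  have by_t: "tail_head_kernel r x (t, s) =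
      indicator {x..} t * t powr (- 2 * r - 1) * (indicator {1..t} s * s powr (r - 1))" for t s
    by (auto simp: tail_head_kernel_def indicator_def)
  have by_s: "tail_head_kernel r x (t, s) =
      indicator {1..} s * s powr (r - 1) * (indicator {max x s..} t * t powr (- 2 * r - 1))" for t s
    by (auto simp: tail_head_kernel_def indicator_def)
  show "integrable lebesgue (\<lambda>s. tail_head_kernel r x (t, s))"
    using integral_powr_Icc(1)[of "r - 1" 1 t] r x unfolding by_t by (cases "x \<le> t") auto
  show "integrable lebesgue (\<lambda>t. tail_head_kernel r x (t, s))"
    using integral_powr_Ici(1)[of "- 2 * r - 1" "max x s"] r x unfolding by_s by auto
  have marginal: "(\<integral>s. tail_head_kernel r x (t, s) \<partial>lebesgue) =
      indicator {x..} t * (t powr (- r - 1) - t powr (- 2 * r - 1)) / r" for t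
  proof (cases "x \<le> t")
    case True
    then have "(\<integral>s. tail_head_kernel r x (t, s) \<partial>lebesgue) =
        t powr (- 2 * r - 1) * ((t powr r - 1) / r)"
      using integral_powr_Icc(2)[of "r - 1" 1 t] r x unfolding by_t by simp
    also have "\<dots> = (t powr (- r - 1) - t powr (- 2 * r - 1)) / r"
      using True x by (simp add: field_simps flip: powr_add)
    finally show ?thesis using True by simp
  qed (simp add: by_t)
  show "integrable lebesgue (\<lambda>t. \<integral>s. tail_head_kernel r x (t, s) \<partial>lebesgue)"
    unfolding marginal
    using r x integral_powr_Ici(1)[of "- r - 1" x] integral_powr_Ici(1)[of "- 2 * r - 1" x]
    by (simp add: right_diff_distrib)
  show "(\<integral>t. tail_head_kernel r x (t, s) \<partial>lebesgue) =
      (x powr (- 2 * r) * (indicator {1..x} s * s powr (r - 1))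
        + indicator {x<..} s * s powr (- r - 1)) / (2 * r)"
  proof (cases "1 \<le> s")
    case True
    have "(\<integral>t. tail_head_kernel r x (t, s) \<partial>lebesgue) =
        s powr (r - 1) * (max x s powr (- 2 * r) / (2 * r))"
      using integral_powr_Ici(2)[of "- 2 * r - 1" "max x s"] True r x unfolding by_s by simp
    moreover have "s powr (r - 1) * s powr (- 2 * r) = s powr (- r - 1)"
      using True by (simp flip: powr_add)
    ultimately show ?thesis
      using True r by (cases "s \<le> x") (simp_all add: indicator_def max_def field_simps)
  qed (use x in \<open>simp add: by_s indicator_def\<close>)
qed

lemma integral_head_tail_kernel:
  fixes r x :: real
  assumes r: "r > 0" and x: "x \<ge> 1"
  shows "integrable lebesgue (\<lambda>s. head_tail_kernel r x (t, s))"
    and "integrable lebesgue (\<lambda>t. head_tail_kernel r x (t, s))"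
    and "integrable lebesgue (\<lambda>t. \<integral>s. head_tail_kernel r x (t, s) \<partial>lebesgue)"
    and "(\<integral>t. head_tail_kernel r x (t, s) \<partial>lebesgue) =
      (indicator {1..x} s * s powr (r - 1) + x powr (2 * r) * (indicator {x<..} s * s powr (- r - 1))
        - indicator {1..} s * s powr (- r - 1)) / (2 * r)"
proof -
  have by_t: "head_tail_kernel r x (t, s) =
      indicator {1..x} t * t powr (2 * r - 1) * (indicator {t..} s * s powr (- r - 1))" for t s
    by (auto simp: head_tail_kernel_def indicator_def)
  have by_s: "head_tail_kernel r x (t, s) =
      indicator {1..} s * s powr (- r - 1) * (indicator {1..min x s} t * t powr (2 * r - 1))" for t s
    by (auto simp: head_tail_kernel_def indicator_def)
  show "integrable lebesgue (\<lambda>s. head_tail_kernel r x (t, s))"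
    using integral_powr_Ici(1)[of "- r - 1" t] r unfolding by_t by (cases "1 \<le> t") auto
  show "integrable lebesgue (\<lambda>t. head_tail_kernel r x (t, s))"
    using integral_powr_Icc(1)[of "2 * r - 1" 1 "min x s"] r x
    unfolding by_s by (cases "1 \<le> s") auto
  have marginal:
      "(\<integral>s. head_tail_kernel r x (t, s) \<partial>lebesgue) = indicator {1..x} t * t powr (r - 1) / r" for t
  proof (cases "1 \<le> t \<and> t \<le> x")
    case True
    then have "(\<integral>s. head_tail_kernel r x (t, s) \<partial>lebesgue) =
        t powr (2 * r - 1) * (t powr (- r) / r)"
      using integral_powr_Ici(2)[of "- r - 1" t] r unfolding by_t by simp
    also have "\<dots> = t powr (r - 1) / r"
      using True by (simp flip: powr_add)
    finally show ?thesis using True by simp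
  qed (auto simp: by_t)
  show "integrable lebesgue (\<lambda>t. \<integral>s. head_tail_kernel r x (t, s) \<partial>lebesgue)"
    unfolding marginal using integral_powr_Icc(1)[of "r - 1" 1 x] r x by simp
  show "(\<integral>t. head_tail_kernel r x (t, s) \<partial>lebesgue) =
      (indicator {1..x} s * s powr (r - 1) + x powr (2 * r) * (indicator {x<..} s * s powr (- r - 1))
        - indicator {1..} s * s powr (- r - 1)) / (2 * r)"
  proof (cases "1 \<le> s")
    case True
    have "(\<integral>t. head_tail_kernel r x (t, s) \<partial>lebesgue) =
        s powr (- r - 1) * ((min x s powr (2 * r) - 1) / (2 * r))"
      using integral_powr_Icc(2)[of "2 * r - 1" 1 "min x s"] True r x unfolding by_s by simp
    moreover have "s powr (- r - 1) * s powr (2 * r) = s powr (r - 1)"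
      using True by (simp flip: powr_add)
    ultimately show ?thesis
      using True r by (cases "s \<le> x") (simp_all add: indicator_def min_def field_simps)
  qed (use x in \<open>simp add: by_s indicator_def\<close>)
qed

lemma tail_weighted_head_average:
  assumes x: "x \<ge> 1"
  shows "(indicator {x..} t * t powr (- r - 1)) *\<^sub>R head_average r h t =
    r *\<^sub>R (\<integral>s. tail_head_kernel r x (t, s) *\<^sub>R h s \<partial>lebesgue)"
proof (cases "x \<le> t")
  case True
  then have weight: "t powr (- r - 1) * (r / t powr r) = r * t powr (- 2 * r - 1)"
    using x by (simp add: field_simps flip: powr_add)
  have kernel_section: "(\<lambda>s. tail_head_kernel r x (t, s) *\<^sub>R h s) =
      (\<lambda>s. t powr (- 2 * r - 1) *\<^sub>R ((indicator {1..t} s * s powr (r - 1)) *\<^sub>R h s))"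
    using True by (auto simp: tail_head_kernel_def indicator_def fun_eq_iff)
  have "r *\<^sub>R (\<integral>s. tail_head_kernel r x (t, s) *\<^sub>R h s \<partial>lebesgue) =
      (r * t powr (- 2 * r - 1)) *\<^sub>R (\<integral>s. (indicator {1..t} s * s powr (r - 1)) *\<^sub>R h s \<partial>lebesgue)"
    unfolding kernel_section integral_scaleR_right by (simp only: scaleR_scaleR)
  then show ?thesis
    using True weight by (simp add: head_average_def)
qed (simp add: tail_head_kernel_def)

lemma head_weighted_tail_average:
  "(indicator {1..x} t * t powr (r - 1)) *\<^sub>R tail_average r h t =
    r *\<^sub>R (\<integral>s. head_tail_kernel r x (t, s) *\<^sub>R h s \<partial>lebesgue)"
proof (cases "1 \<le> t \<and> t \<le> x")
  case True
  then have weight: "t powr (r - 1) * (r * t powr r) = r * t powr (2 * r - 1)"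
    by (simp add: field_simps flip: powr_add)
  have kernel_section: "(\<lambda>s. head_tail_kernel r x (t, s) *\<^sub>R h s) =
      (\<lambda>s. t powr (2 * r - 1) *\<^sub>R ((indicator {t..} s * s powr (- r - 1)) *\<^sub>R h s))"
    using True by (auto simp: head_tail_kernel_def indicator_def fun_eq_iff)
  have "r *\<^sub>R (\<integral>s. head_tail_kernel r x (t, s) *\<^sub>R h s \<partial>lebesgue) =
      (r * t powr (2 * r - 1)) *\<^sub>R (\<integral>s. (indicator {t..} s * s powr (- r - 1)) *\<^sub>R h s \<partial>lebesgue)"
    unfolding kernel_section integral_scaleR_right by (simp only: scaleR_scaleR)
  then show ?thesis
    using True weight by (simp add: tail_average_def)
qed (auto simp: head_tail_kernel_def)

lemma tail_average_head_average:
  fixes h :: "real \<Rightarrow> 'a::{banach, second_countable_topology}"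
  assumes r: "r > 0" and x: "x \<ge> 1" and h [measurable]: "h \<in> borel_measurable lebesgue"
    and bound: "\<And>s. norm (h s) \<le> C"
  shows "tail_average r (head_average r h) x = (1 / 2) *\<^sub>R (head_average r h x + tail_average r h x)"
proof -
  note kernel = integral_tail_head_kernel[OF r x]
  define H where "H = (\<integral>s. (indicator {1..x} s * s powr (r - 1)) *\<^sub>R h s \<partial>lebesgue)"
  define T where "T = (\<integral>s. (indicator {x..} s * s powr (- r - 1)) *\<^sub>R h s \<partial>lebesgue)"
  define h\<^sub>1 where "h\<^sub>1 s = (x powr (- 2 * r) * (indicator {1..x} s * s powr (r - 1))) *\<^sub>R h s" for s
  define h\<^sub>2 where "h\<^sub>2 s = (indicator {x<..} s * s powr (- r - 1)) *\<^sub>R h s" for s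
  have integrable: "integrable lebesgue h\<^sub>1" "integrable lebesgue h\<^sub>2"
    unfolding h\<^sub>1_def h\<^sub>2_def
    using integral_head_weight(1)[OF r x] integrable_powr_Ioi[of "- r - 1" x] r x h bound
    by (auto intro!: integrable_scaleR_bounded)
  have integral_h\<^sub>1: "(\<integral>s. h\<^sub>1 s \<partial>lebesgue) = x powr (- 2 * r) *\<^sub>R H"
    unfolding h\<^sub>1_def H_def by (simp flip: scaleR_scaleR)
  have integral_h\<^sub>2: "(\<integral>s. h\<^sub>2 s \<partial>lebesgue) = T"
    unfolding h\<^sub>2_def T_def by (rule integral_indicator_greaterThan_eq_atLeast) measurable
  have "tail_average r (head_average r h) x =
      (r * x powr r * r) *\<^sub>R (\<integral>t. (\<integral>s. tail_head_kernel r x (t, s) *\<^sub>R h s \<partial>lebesgue) \<partial>lebesgue)"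
    by (simp add: tail_average_def tail_weighted_head_average[OF x])
  also have "\<dots> =
      (r * x powr r * r) *\<^sub>R (\<integral>s. (\<integral>t. tail_head_kernel r x (t, s) \<partial>lebesgue) *\<^sub>R h s \<partial>lebesgue)"
    using kernel h bound
    by (subst lebesgue_pair.integral_kernel_swap) (auto simp: tail_head_kernel_def)
  also have "\<dots> = (r * x powr r * r) *\<^sub>R (\<integral>s. (1 / (2 * r)) *\<^sub>R (h\<^sub>1 s + h\<^sub>2 s) \<partial>lebesgue)"
    unfolding kernel(4) h\<^sub>1_def h\<^sub>2_def
    by (simp add: add_divide_distrib scaleR_add_left scaleR_add_right)
  also have "\<dots> = (r * x powr r * r / (2 * r)) *\<^sub>R (x powr (- 2 * r) *\<^sub>R H + T)"
    using integrable by (simp add: integral_h\<^sub>1 integral_h\<^sub>2)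
  also have "\<dots> = (1 / 2) *\<^sub>R ((r / x powr r) *\<^sub>R H + (r * x powr r) *\<^sub>R T)"
  proof -
    have "r * x powr r * r / (2 * r) * x powr (- 2 * r) = 1 / 2 * (r / x powr r)"
      using r x by (simp add: field_simps powr_minus flip: powr_add)
    then show ?thesis
      using r by (simp add: scaleR_add_right)
  qed
  finally show ?thesis
    by (simp add: head_average_def tail_average_def H_def T_def)
qed

lemma head_average_tail_average:
  fixes h :: "real \<Rightarrow> 'a::{banach, second_countable_topology}"
  assumes r: "r > 0" and x: "x \<ge> 1" and h [measurable]: "h \<in> borel_measurable lebesgue"
    and bound: "\<And>s. norm (h s) \<le> C"
  shows "head_average r (tail_average r h) x =
    (1 / 2) *\<^sub>R (head_average r h x + tail_average r h x - x powr (- r) *\<^sub>R tail_average r h 1)"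
proof -
  note kernel = integral_head_tail_kernel[OF r x]
  define H where "H = (\<integral>s. (indicator {1..x} s * s powr (r - 1)) *\<^sub>R h s \<partial>lebesgue)"
  define T where "T = (\<integral>s. (indicator {x..} s * s powr (- r - 1)) *\<^sub>R h s \<partial>lebesgue)"
  define T\<^sub>1 where "T\<^sub>1 = (\<integral>s. (indicator {1..} s * s powr (- r - 1)) *\<^sub>R h s \<partial>lebesgue)"
  define h\<^sub>1 where "h\<^sub>1 s = (indicator {1..x} s * s powr (r - 1)) *\<^sub>R h s" for s
  define h\<^sub>2 where "h\<^sub>2 s = (x powr (2 * r) * (indicator {x<..} s * s powr (- r - 1))) *\<^sub>R h s" for s
  define h\<^sub>3 where "h\<^sub>3 s = (indicator {1..} s * s powr (- r - 1)) *\<^sub>R h s" for s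
  have integrable: "integrable lebesgue h\<^sub>1" "integrable lebesgue h\<^sub>2" "integrable lebesgue h\<^sub>3"
    unfolding h\<^sub>1_def h\<^sub>2_def h\<^sub>3_def
    using integral_head_weight(1)[OF r x] integrable_powr_Ioi[of "- r - 1" x]
      integral_tail_weight(1)[OF r, of 1] r x h bound
    by (auto intro!: integrable_scaleR_bounded)
  have integral_h\<^sub>1: "(\<integral>s. h\<^sub>1 s \<partial>lebesgue) = H" and integral_h\<^sub>3: "(\<integral>s. h\<^sub>3 s \<partial>lebesgue) = T\<^sub>1"
    by (simp_all add: h\<^sub>1_def H_def h\<^sub>3_def T\<^sub>1_def)
  have integral_h\<^sub>2: "(\<integral>s. h\<^sub>2 s \<partial>lebesgue) = x powr (2 * r) *\<^sub>R T"
    using integral_indicator_greaterThan_eq_atLeast[of "\<lambda>s. s powr (- r - 1)" h x]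
    unfolding h\<^sub>2_def T_def by (simp flip: scaleR_scaleR)
  have "head_average r (tail_average r h) x =
      (r / x powr r * r) *\<^sub>R (\<integral>t. (\<integral>s. head_tail_kernel r x (t, s) *\<^sub>R h s \<partial>lebesgue) \<partial>lebesgue)"
    by (simp add: head_average_def head_weighted_tail_average)
  also have "\<dots> =
      (r / x powr r * r) *\<^sub>R (\<integral>s. (\<integral>t. head_tail_kernel r x (t, s) \<partial>lebesgue) *\<^sub>R h s \<partial>lebesgue)"
    using kernel h bound
    by (subst lebesgue_pair.integral_kernel_swap) (auto simp: head_tail_kernel_def)
  also have "\<dots> = (r / x powr r * r) *\<^sub>R (\<integral>s. (1 / (2 * r)) *\<^sub>R (h\<^sub>1 s + h\<^sub>2 s - h\<^sub>3 s) \<partial>lebesgue)"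
    unfolding kernel(4) h\<^sub>1_def h\<^sub>2_def h\<^sub>3_def
    by (simp add: add_divide_distrib diff_divide_distrib scaleR_add_left scaleR_diff_left
        scaleR_add_right scaleR_diff_right)
  also have "\<dots> = (r / x powr r * r / (2 * r)) *\<^sub>R (H + x powr (2 * r) *\<^sub>R T - T\<^sub>1)"
    using integrable by (simp add: integral_h\<^sub>1 integral_h\<^sub>2 integral_h\<^sub>3)
  also have "\<dots> = (1 / 2) *\<^sub>R ((r / x powr r) *\<^sub>R H + (r * x powr r) *\<^sub>R T - x powr (- r) *\<^sub>R r *\<^sub>R T\<^sub>1)"
  proof -
    have "x powr (- r) * x powr (2 * r) = x powr r"
      by (simp flip: powr_add)
    moreover have "r / x powr r = x powr (- r) * r"
      by (simp add: powr_minus divide_inverse)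
    ultimately show ?thesis
      using r by (simp add: scaleR_add_right scaleR_diff_right)
  qed
  finally show ?thesis
    by (simp add: head_average_def tail_average_def H_def T_def T\<^sub>1_def)
qed

lemma bounded_tendsto_head_average_iff_tendsto_tail_average:
  fixes h :: "real \<Rightarrow> 'a::{banach, second_countable_topology}"
  assumes r: "r > 0" and h [measurable]: "h \<in> borel_measurable lebesgue"
    and bound: "\<And>s. norm (h s) \<le> C"
  shows "(head_average r h \<longlongrightarrow> \<alpha>) at_top \<longleftrightarrow> (tail_average r h \<longlongrightarrow> \<alpha>) at_top"
proof
  assume "(head_average r h \<longlongrightarrow> \<alpha>) at_top"
  then have "(tail_average r (head_average r h) \<longlongrightarrow> \<alpha>) at_top"
    by (intro tendsto_tail_average[OF r]) simp_all
  with \<open>(head_average r h \<longlongrightarrow> \<alpha>) at_top\<close>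
  have "((\<lambda>x. 2 *\<^sub>R tail_average r (head_average r h) x - head_average r h x) \<longlongrightarrow> 2 *\<^sub>R \<alpha> - \<alpha>) at_top"
    by (intro tendsto_intros)
  moreover have "\<forall>\<^sub>F x in at_top.
      2 *\<^sub>R tail_average r (head_average r h) x - head_average r h x = tail_average r h x"
    unfolding eventually_at_top_linorder
    by (intro exI[of _ 1] allI impI) (simp add: tail_average_head_average[OF r _ h bound])
  ultimately show "(tail_average r h \<longlongrightarrow> \<alpha>) at_top"
    by (simp add: scaleR_2 Lim_transform_eventually)
next
  assume "(tail_average r h \<longlongrightarrow> \<alpha>) at_top"
  moreover have "norm (tail_average r h t) \<le> C" if "t \<ge> 1" for t
    using that bound by (intro norm_tail_average_le[OF r]) auto
  ultimately have "(head_average r (tail_average r h) \<longlongrightarrow> \<alpha>) at_top"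
    by (intro tendsto_head_average[OF r]) simp_all
  moreover have "((\<lambda>x::real. x powr (- r)) \<longlongrightarrow> 0) at_top"
    using r by (intro tendsto_neg_powr filterlim_ident) auto
  ultimately have "((\<lambda>x. 2 *\<^sub>R head_average r (tail_average r h) x - tail_average r h x
      + x powr (- r) *\<^sub>R tail_average r h 1) \<longlongrightarrow> 2 *\<^sub>R \<alpha> - \<alpha> + 0 *\<^sub>R tail_average r h 1) at_top"
    using \<open>(tail_average r h \<longlongrightarrow> \<alpha>) at_top\<close> by (intro tendsto_intros)
  moreover have "\<forall>\<^sub>F x in at_top. 2 *\<^sub>R head_average r (tail_average r h) x - tail_average r h x
      + x powr (- r) *\<^sub>R tail_average r h 1 = head_average r h x"
    unfolding eventually_at_top_linorder
    by (intro exI[of _ 1] allI impI) (simp add: head_average_tail_average[OF r _ h bound])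
  ultimately show "(head_average r h \<longlongrightarrow> \<alpha>) at_top"
    by (simp add: scaleR_2 Lim_transform_eventually)
qed

lemma head_average_cong_AE:
  assumes [measurable]: "f \<in> borel_measurable lebesgue" "g \<in> borel_measurable lebesgue"
    and eq: "AE t in lebesgue. t \<ge> 1 \<longrightarrow> f t = g t"
  shows "head_average r f x = head_average r g x"
proof -
  have "(\<integral>t. (indicator {1..x} t * t powr (r - 1)) *\<^sub>R f t \<partial>lebesgue) =
      (\<integral>t. (indicator {1..x} t * t powr (r - 1)) *\<^sub>R g t \<partial>lebesgue)"
  proof (rule integral_cong_AE)
    show "AE t in lebesgue. (indicator {1..x} t * t powr (r - 1)) *\<^sub>R f t =
        (indicator {1..x} t * t powr (r - 1)) *\<^sub>R g t"
      using eq by eventually_elim (simp add: indicator_def)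
  qed measurable
  then show ?thesis
    by (simp add: head_average_def)
qed

lemma tail_average_cong_AE:
  assumes [measurable]: "f \<in> borel_measurable lebesgue" "g \<in> borel_measurable lebesgue"
    and eq: "AE t in lebesgue. t \<ge> 1 \<longrightarrow> f t = g t" and x: "x \<ge> 1"
  shows "tail_average r f x = tail_average r g x"
proof -
  have "(\<integral>t. (indicator {x..} t * t powr (- r - 1)) *\<^sub>R f t \<partial>lebesgue) =
      (\<integral>t. (indicator {x..} t * t powr (- r - 1)) *\<^sub>R g t \<partial>lebesgue)"
  proof (rule integral_cong_AE)
    show "AE t in lebesgue. (indicator {x..} t * t powr (- r - 1)) *\<^sub>R f t =
        (indicator {x..} t * t powr (- r - 1)) *\<^sub>R g t"
      using eq by eventually_elim (use x in \<open>auto simp: indicator_def\<close>)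
  qed measurable
  then show ?thesis
    by (simp add: tail_average_def)
qed

lemma bounded_AE_representative:
  fixes f :: "'a \<Rightarrow> 'b::{banach, second_countable_topology}"
  assumes [measurable]: "f \<in> borel_measurable M"
    and bound: "AE t in M. norm (f t) \<le> C" and C: "C \<ge> 0"
  obtains h where "h \<in> borel_measurable M" "\<And>t. norm (h t) \<le> C" "AE t in M. f t = h t"
proof
  show "(\<lambda>t. if norm (f t) \<le> C then f t else 0) \<in> borel_measurable M"
    by measurable
  show "norm (if norm (f t) \<le> C then f t else 0) \<le> C" for t
    using C by auto
  show "AE t in M. f t = (if norm (f t) \<le> C then f t else 0)"
    using bound by eventually_elim simp
qed

lemma tendsto_head_average_iff_tendsto_tail_average:
  fixes g :: "real \<Rightarrow> 'a::{banach, second_countable_topology}"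
  assumes r: "r > 0" and g [measurable]: "g \<in> borel_measurable lebesgue"
    and bound: "AE t in lebesgue. t \<ge> 1 \<longrightarrow> norm (g t) \<le> C"
  shows "(head_average r g \<longlongrightarrow> \<alpha>) at_top \<longleftrightarrow> (tail_average r g \<longlongrightarrow> \<alpha>) at_top"
proof -
  have "(\<lambda>t. indicator {1..} t *\<^sub>R g t) \<in> borel_measurable lebesgue"
    by measurable
  moreover have "AE t in lebesgue. norm (indicator {1..} t *\<^sub>R g t) \<le> max C 0"
    using bound by eventually_elim (auto simp: indicator_def)
  ultimately obtain h where h [measurable]: "h \<in> borel_measurable lebesgue"
    and h_bound: "\<And>t. norm (h t) \<le> max C 0"
    and ae: "AE t in lebesgue. indicator {1..} t *\<^sub>R g t = h t"
    using bounded_AE_representative[OF _ _ max.cobounded2] by blast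
  have g_h: "AE t in lebesgue. t \<ge> 1 \<longrightarrow> g t = h t"
    using ae by eventually_elim (auto simp: indicator_def)
  have "head_average r g = head_average r h"
    by (rule ext) (rule head_average_cong_AE[OF g h g_h])
  moreover have "\<forall>\<^sub>F x in at_top. tail_average r h x = tail_average r g x"
    unfolding eventually_at_top_linorder
    by (intro exI[of _ 1] allI impI tail_average_cong_AE[OF g h g_h, symmetric])
  ultimately show ?thesis
    using bounded_tendsto_head_average_iff_tendsto_tail_average[OF r h h_bound] tendsto_cong
    by metis
qed

lemma head_average_indicator_atLeast:
  "head_average r (\<lambda>t. indicator {1..} t *\<^sub>R f t) x =
    (r / x powr r) *\<^sub>R (LINT t:{1..x}|lebesgue. t powr (r - 1) *\<^sub>R f t)"
  unfolding head_average_def set_lebesgue_integral_def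
  by (rule arg_cong[where f = "scaleR _"], rule Bochner_Integration.integral_cong)
    (auto simp: indicator_def)

lemma tail_average_indicator_atLeast:
  assumes "x \<ge> 1"
  shows "tail_average r (\<lambda>t. indicator {1..} t *\<^sub>R f t) x =
    (r * x powr r) *\<^sub>R (LINT t:{x..}|lebesgue. t powr (- r - 1) *\<^sub>R f t)"
  unfolding tail_average_def set_lebesgue_integral_def
  by (rule arg_cong[where f = "scaleR _"], rule Bochner_Integration.integral_cong)
    (use assms in \<open>auto simp: indicator_def\<close>)

theorem corollary4p1:
  fixes f :: "real \<Rightarrow> complex" and r :: real and \<alpha> :: complex
  assumes meas: "set_borel_measurable lebesgue {1..} f"
    and bdd: "\<exists>C. AE t in lebesgue. t \<in> {1..} \<longrightarrow> norm (f t) \<le> C"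
    and r: "r > 0"
  shows "((\<lambda>x. complex_of_real (r / x powr r) *
            (LINT t:{1..x}|lebesgue. complex_of_real (t powr (r - 1)) * f t)) \<longlongrightarrow> \<alpha>) at_top
     \<longleftrightarrow> ((\<lambda>x. complex_of_real (r * x powr r) *
            (LINT t:{x..}|lebesgue. f t / complex_of_real (t powr (r + 1)))) \<longlongrightarrow> \<alpha>) at_top"
proof -
  define g where "g = (\<lambda>t. indicator {1..} t *\<^sub>R f t)"
  have g: "g \<in> borel_measurable lebesgue"
    using meas by (simp add: set_borel_measurable_def g_def)
  obtain C where "AE t in lebesgue. t \<in> {1..} \<longrightarrow> norm (f t) \<le> C"
    using bdd by blast
  then have "AE t in lebesgue. t \<ge> 1 \<longrightarrow> norm (g t) \<le> C"
    by eventually_elim (simp add: g_def)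
  note limits = tendsto_head_average_iff_tendsto_tail_average[OF r g this]
  have "t powr (- r - 1) = inverse (t powr (r + 1))" if "t > 0" for t
    using that by (simp flip: powr_minus)
  then have "(LINT t:{x..}|lebesgue. f t / complex_of_real (t powr (r + 1))) =
      (LINT t:{x..}|lebesgue. t powr (- r - 1) *\<^sub>R f t)" if "x \<ge> 1" for x
    using that by (intro set_lebesgue_integral_cong)
      (auto simp: scaleR_conv_of_real divide_inverse of_real_inverse mult.commute)
  then have tail: "\<forall>\<^sub>F x in at_top. tail_average r g x = complex_of_real (r * x powr r) *
      (LINT t:{x..}|lebesgue. f t / complex_of_real (t powr (r + 1)))"
    unfolding eventually_at_top_linorder g_def
    by (intro exI[of _ 1] allI impI, subst tail_average_indicator_atLeast)
      (simp_all add: scaleR_conv_of_real)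
  have head: "(\<lambda>x. complex_of_real (r / x powr r) *
      (LINT t:{1..x}|lebesgue. complex_of_real (t powr (r - 1)) * f t)) = head_average r g"
    by (rule ext) (unfold g_def head_average_indicator_atLeast, simp only: scaleR_conv_of_real)
  show ?thesis
    unfolding head limits using tail by (rule tendsto_cong)
qed

end
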